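(* Let $n\ge 1$ and $\alpha,\beta>0$, and consider the TASEP with open boundaries on $n$ sites with entry rate $\alpha$ and exit rate $\beta$. For integers $m,k\ge 0$ define $$N_{m,k}(\alpha,\beta)=\alpha^k\beta^m\sum_{j=0}^{m}\sum_{\ell=0}^{k}\alpha^j\beta^\ell\left(\binom{k+j-1}{j}\binom{m+\ell-1}{\ell}-\binom{k+j-1}{j-1}\binom{m+\ell-1}{\ell-1}\right),$$ and $Z_n(\alpha,\beta)=\sum_{k=0}^{n}N_{n-k,k}(\alpha,\beta)$. Then for each $0\le k\le n$, the stationary probability that exactly $k$ of the $n$ sites are occupied by particles equals $N_{n-k,k}(\alpha,\beta)/Z_n(\alpha,\beta)$.
   Context: Binomial coefficients are $\binom{a}{b}=a(a-1)\cdots(a-b+1)/b!$ for integers $a$ and $b\ge 0$ (so $\binom{-1}{0}=1$), and $\binom{a}{b}=0$ for $b<0$. The TASEP (totally asymmetric simple exclusion process) with open boundaries on $n$ sites is the continuous-time Markov chain on $\{0,1\}^n$ (1 = particle at that site, 0 = hole) with transitions: if site $1$ is empty, a particle enters there at rate $\alpha$; if site $n$ is occupied, that particle exits at rate $\beta$; for $1\le i<n$, if site $i$ is occupied and site $i+1$ is empty, the particle hops from $i$ to $i+1$ at rate $1$. For $\alpha,\beta>0$ it has a unique stationary distribution. *)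

theory Defs
  imports Complex_Main
begin

definition ibinom :: "int \<Rightarrow> int \<Rightarrow> real" where
  "ibinom a b = (if b < 0 then 0 else (real_of_int a) gchoose (nat b))"

definition Nmk :: "real \<Rightarrow> real \<Rightarrow> nat \<Rightarrow> nat \<Rightarrow> real" where
  "Nmk \<alpha> \<beta> m k = \<alpha> ^ k * \<beta> ^ m *
     (\<Sum>j=0..m. \<Sum>l=0..k. \<alpha> ^ j * \<beta> ^ l *
        (ibinom (int k + int j - 1) (int j) * ibinom (int m + int l - 1) (int l)
         - ibinom (int k + int j - 1) (int j - 1) * ibinom (int m + int l - 1) (int l - 1)))"

definition Zn :: "real \<Rightarrow> real \<Rightarrow> nat \<Rightarrow> real" where
  "Zn \<alpha> \<beta> n = (\<Sum>k=0..n. Nmk \<alpha> \<beta> (n - k) k)"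

text \<open>States of the TASEP on n sites: boolean lists of length n
  (entry i, 0-based, is site i+1; True = particle).\<close>
definition tasep_states :: "nat \<Rightarrow> bool list set" where
  "tasep_states n = {x. length x = n}"

definition tasep_rate :: "real \<Rightarrow> real \<Rightarrow> bool list \<Rightarrow> bool list \<Rightarrow> real" where
  "tasep_rate \<alpha> \<beta> x y =
     (if \<not> x ! 0 \<and> y = x[0 := True] then \<alpha> else 0)
   + (if x ! (length x - 1) \<and> y = x[length x - 1 := False] then \<beta> else 0)
   + (\<Sum>i<length x - 1. if x ! i \<and> \<not> x ! Suc i \<and> y = x[i := False, Suc i := True]
                          then 1 else 0)"

definition tasep_stationary :: "nat \<Rightarrow> real \<Rightarrow> real \<Rightarrow> (bool list \<Rightarrow> real) \<Rightarrow> bool" where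
  "tasep_stationary n \<alpha> \<beta> \<pi> \<longleftrightarrow>
     (\<forall>x\<in>tasep_states n. \<pi> x \<ge> 0) \<and>
     (\<Sum>x\<in>tasep_states n. \<pi> x) = 1 \<and>
     (\<forall>x\<in>tasep_states n.
        (\<Sum>y\<in>tasep_states n - {x}. \<pi> y * tasep_rate \<alpha> \<beta> y x)
        = \<pi> x * (\<Sum>y\<in>tasep_states n - {x}. tasep_rate \<alpha> \<beta> x y))"

end

theory Submission
  imports Defs
begin

text \<open>The stationary weights are those of the matrix ansatz of Derrida, Evans, Hakim and
  Pasquier: \<open>\<langle>W| X\<^sub>1 \<cdots> X\<^sub>n |V\<rangle>\<close> with \<open>DE = D + E\<close>, \<open>\<langle>W|E = \<alpha>\<^sup>-\<^sup>1\<langle>W|\<close> and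
  \<open>D|V\<rangle> = \<beta>\<^sup>-\<^sup>1|V\<rangle>\<close>. Realised on polynomials in \<open>a = 1/\<alpha>\<close>, \<open>b = 1/\<beta>\<close>, these weights
  satisfy global balance by a telescoping argument, and they are the only solution because
  the chain is irreducible. Summing the representation over all words with \<open>m\<close> holes and
  \<open>k\<close> particles gives coefficient arrays obeying a Pascal-type recursion in \<open>(m, k)\<close>; by
  hockey-stick identities its solution is the array of binomial differences in \<open>N\<^sub>m\<^sub>,\<^sub>k\<close>,
  and evaluating at \<open>(a, b)\<close> yields \<open>N\<^sub>m\<^sub>,\<^sub>k / (\<alpha>\<beta>)\<^sup>n\<close>.\<close>

section \<open>A representation of the matrix ansatz\<close>

type_synonym coeffs = "nat \<Rightarrow> nat \<Rightarrow> real"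

text \<open>A coefficient array \<open>c\<close> stands for the polynomial \<open>\<Sum> c i j a^i b^j\<close>, truncated
  at degree \<open>K\<close> in each variable. The word \<open>x\<close> is sent to the row vector
  \<open>\<langle>W| X\<^sub>1 \<cdots> X\<^sub>r\<close> (with \<open>X = D\<close> for a particle, \<open>X = E\<close> for a hole), where
  \<open>D\<close> maps \<open>a^i b^j\<close> to \<open>a^i b^(j+1)\<close> and \<open>E\<close> maps it to \<open>a^i (b + \<dots> + b^j) + a^(i+1)\<close>.
  These satisfy \<open>DE = D + E\<close> and \<open>\<langle>W|E = a\<langle>W|\<close>, and evaluation at \<open>(a, b)\<close> realises
  \<open>D|V\<rangle> = b|V\<rangle>\<close>.\<close>

definition shift_a :: "coeffs \<Rightarrow> coeffs" where
  "shift_a c i j = (if i = 0 then 0 else c (i - 1) j)"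

definition shift_b :: "coeffs \<Rightarrow> coeffs" where
  "shift_b c i j = (if j = 0 then 0 else c i (j - 1))"

definition opE :: "nat \<Rightarrow> coeffs \<Rightarrow> coeffs" where
  "opE K c i j = (if j \<ge> 1 then (\<Sum>j'=j..K. c i j')
                  else if i \<ge> 1 then (\<Sum>j'\<le>K. c (i - 1) j') else 0)"

definition site_op :: "nat \<Rightarrow> bool \<Rightarrow> coeffs \<Rightarrow> coeffs" where
  "site_op K p = (if p then shift_b else opE K)"

definition word_op :: "nat \<Rightarrow> bool list \<Rightarrow> coeffs \<Rightarrow> coeffs" where
  "word_op K x c = foldl (\<lambda>c p. site_op K p c) c x"

definition one_coeffs :: coeffs where
  "one_coeffs i j = (if i = 0 \<and> j = 0 then 1 else 0)"

definition word_coeffs :: "nat \<Rightarrow> bool list \<Rightarrow> coeffs" where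
  "word_coeffs K x = word_op K x one_coeffs"

definition eval_coeffs :: "nat \<Rightarrow> real \<Rightarrow> real \<Rightarrow> coeffs \<Rightarrow> real" where
  "eval_coeffs K a b c = (\<Sum>i\<le>K. \<Sum>j\<le>K. c i j * a ^ i * b ^ j)"

definition ansatz_weight :: "nat \<Rightarrow> real \<Rightarrow> real \<Rightarrow> bool list \<Rightarrow> real" where
  "ansatz_weight K a b x = eval_coeffs K a b (word_coeffs K x)"

lemma word_op_append: "word_op K (u @ v) c = word_op K v (word_op K u c)"
  by (simp add: word_op_def)

lemma word_op_snoc: "word_op K (u @ [p]) c = site_op K p (word_op K u c)"
  by (simp add: word_op_def)

lemma word_coeffs_Nil: "word_coeffs K [] = one_coeffs"
  by (simp add: word_coeffs_def word_op_def)

lemma word_coeffs_snoc: "word_coeffs K (u @ [p]) = site_op K p (word_coeffs K u)"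
  by (simp add: word_coeffs_def word_op_snoc)

lemma word_coeffs_append:
  "word_coeffs K (u @ v) = word_op K v (word_coeffs K u)"
  by (simp add: word_coeffs_def word_op_append)

lemma site_op_add:
  "site_op K p (\<lambda>i j. c i j + d i j) = (\<lambda>i j. site_op K p c i j + site_op K p d i j)"
  by (auto simp: site_op_def shift_b_def opE_def sum.distrib fun_eq_iff)

lemma word_op_add:
  "word_op K v (\<lambda>i j. c i j + d i j) = (\<lambda>i j. word_op K v c i j + word_op K v d i j)"
  by (induction v arbitrary: c d rule: rev_induct) (simp_all add: word_op_def site_op_add)

lemma word_coeffs_vanish:
  "length x < i \<Longrightarrow> word_coeffs K x i j = 0" "length x < j \<Longrightarrow> word_coeffs K x i j = 0"
proof (induction x arbitrary: i j rule: rev_induct)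
  case Nil
  { case 1 then show ?case by (simp add: word_coeffs_Nil one_coeffs_def) }
  { case 2 then show ?case by (simp add: word_coeffs_Nil one_coeffs_def) }
next
  case (snoc p x)
  { case 1 then show ?case using snoc.IH
      by (auto simp: word_coeffs_snoc site_op_def shift_b_def opE_def intro!: sum.neutral) }
  { case 2 then show ?case using snoc.IH
      by (auto simp: word_coeffs_snoc site_op_def shift_b_def opE_def intro!: sum.neutral) }
qed

lemma sum_atMost_shift_right:
  fixes g :: "nat \<Rightarrow> 'a::comm_monoid_add"
  assumes "g K = 0"
  shows "(\<Sum>j\<le>K. if j = 0 then 0 else g (j - 1)) = (\<Sum>j\<le>K. g j)"
proof (cases K)
  case (Suc K')
  then have "(\<Sum>j\<le>K. if j = 0 then 0 else g (j - 1)) = (\<Sum>j\<le>K'. g j)"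
    unfolding Suc sum.atMost_Suc_shift by simp
  also have "\<dots> = (\<Sum>j\<le>K. g j)"
    using assms Suc by simp
  finally show ?thesis .
qed (use assms in simp)

lemma sum_atLeastAtMost_shift_right:
  fixes f :: "nat \<Rightarrow> 'a::comm_monoid_add"
  assumes "\<And>t. K \<le> t \<Longrightarrow> f t = 0" and "j \<ge> 1"
  shows "(\<Sum>j'=j..K. f (j' - 1)) = f (j - 1) + (\<Sum>j'=j..K. f j')"
proof -
  obtain j0 where j: "j = Suc j0"
    using assms(2) by (cases j) auto
  show ?thesis
  proof (cases K)
    case 0
    then show ?thesis using assms j by simp
  next
    case (Suc K0)
    have "(\<Sum>j'=j..K. f (j' - 1)) = (\<Sum>t=j0..K0. f t)"
      using sum.atLeast_Suc_atMost_Suc_shift[of "\<lambda>t. f (t - 1)" j0 K0] j Suc by simp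
    also have "\<dots> = (\<Sum>t=j0..K. f t)"
      using Suc assms(1)[of K] by (cases "j0 \<le> K") (auto simp: sum.nat_ivl_Suc')
    also have "\<dots> = f j0 + (\<Sum>t=j..K. f t)"
      using j assms(1)[of j0] by (cases "j0 \<le> K") (auto simp: sum.atLeast_Suc_atMost)
    finally show ?thesis using j by simp
  qed
qed

lemma opE_shift_b:
  assumes "\<And>i t. K \<le> t \<Longrightarrow> c i t = 0"
  shows "opE K (shift_b c) = (\<lambda>i j. shift_b c i j + opE K c i j)"
proof (intro ext)
  fix i j
  show "opE K (shift_b c) i j = shift_b c i j + opE K c i j"
  proof (cases "j \<ge> 1")
    case True
    have "(\<Sum>j'=j..K. shift_b c i j') = (\<Sum>j'=j..K. c i (j' - 1))"
      using True by (intro sum.cong) (auto simp: shift_b_def)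
    also have "\<dots> = c i (j - 1) + (\<Sum>j'=j..K. c i j')"
      by (rule sum_atLeastAtMost_shift_right) (use assms True in auto)
    finally show ?thesis
      using True by (simp add: opE_def shift_b_def)
  next
    case False
    moreover have "(\<Sum>j'\<le>K. shift_b c (i - 1) j') = (\<Sum>j'\<le>K. c (i - 1) j')"
      unfolding shift_b_def by (rule sum_atMost_shift_right) (use assms in auto)
    ultimately show ?thesis
      by (simp add: opE_def shift_b_def)
  qed
qed

lemma opE_shift_a: "opE K (shift_a c) = shift_a (opE K c)"
proof (intro ext)
  fix i j
  show "opE K (shift_a c) i j = shift_a (opE K c) i j"
    by (cases "j \<ge> 1"; cases "i \<ge> 2") (auto simp: opE_def shift_a_def numeral_2_eq_2 le_Suc_eq)
qed

lemma word_op_shift_a: "word_op K v (shift_a c) = shift_a (word_op K v c)"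
proof (induction v rule: rev_induct)
  case (snoc p v)
  have "site_op K p (shift_a d) = shift_a (site_op K p d)" for d
    by (auto simp: site_op_def shift_b_def shift_a_def opE_shift_a fun_eq_iff)
  then show ?case
    using snoc by (simp add: word_op_snoc)
qed (simp add: word_op_def)

lemma opE_one_coeffs: "opE K one_coeffs = shift_a one_coeffs"
  by (auto simp: opE_def shift_a_def one_coeffs_def fun_eq_iff intro!: sum.neutral)

lemma word_coeffs_Cons_False: "word_coeffs K (False # v) = shift_a (word_coeffs K v)"
proof -
  have "word_coeffs K (False # v) = word_op K v (opE K one_coeffs)"
    by (simp add: word_coeffs_def word_op_def site_op_def)
  then show ?thesis
    by (simp add: opE_one_coeffs word_op_shift_a word_coeffs_def)
qed

lemma eval_coeffs_add:
  "eval_coeffs K a b (\<lambda>i j. c i j + d i j) = eval_coeffs K a b c + eval_coeffs K a b d"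
  by (simp add: eval_coeffs_def algebra_simps sum.distrib)

lemma eval_coeffs_one: "eval_coeffs K a b one_coeffs = 1"
proof -
  have "(\<Sum>j\<le>K. one_coeffs i j * a ^ i * b ^ j) = (if i = 0 then 1 else 0)" for i
    by (cases "i = 0") (simp_all add: one_coeffs_def if_distrib[of "\<lambda>x. x * _"] cong: if_cong)
  then show ?thesis
    by (simp add: eval_coeffs_def)
qed

lemma eval_coeffs_shift_b:
  assumes "\<And>i. c i K = 0"
  shows "eval_coeffs K a b (shift_b c) = b * eval_coeffs K a b c"
proof -
  have "eval_coeffs K a b (shift_b c)
      = (\<Sum>i\<le>K. \<Sum>j\<le>K. if j = 0 then 0 else c i (j - 1) * a ^ i * b ^ (j - 1) * b)"
    unfolding eval_coeffs_def shift_b_def by (intro sum.cong refl) (auto simp: power_eq_if)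
  also have "\<dots> = (\<Sum>i\<le>K. \<Sum>j\<le>K. c i j * a ^ i * b ^ j * b)"
    by (intro sum.cong refl sum_atMost_shift_right) (use assms in auto)
  finally show ?thesis
    by (simp add: eval_coeffs_def sum_distrib_left algebra_simps)
qed

lemma eval_coeffs_shift_a:
  assumes "\<And>j. c K j = 0"
  shows "eval_coeffs K a b (shift_a c) = a * eval_coeffs K a b c"
proof -
  have "eval_coeffs K a b (shift_a c)
      = (\<Sum>i\<le>K. if i = 0 then 0 else (\<Sum>j\<le>K. c (i - 1) j * a ^ (i - 1) * b ^ j * a))"
    unfolding eval_coeffs_def shift_a_def
    by (intro sum.cong refl) (auto simp: power_eq_if sum_distrib_right algebra_simps)
  also have "\<dots> = (\<Sum>i\<le>K. \<Sum>j\<le>K. c i j * a ^ i * b ^ j * a)"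
    by (intro sum_atMost_shift_right) (use assms in auto)
  finally show ?thesis
    by (simp add: eval_coeffs_def sum_distrib_left algebra_simps)
qed

lemma ansatz_weight_snoc_True:
  "length u < K \<Longrightarrow> ansatz_weight K a b (u @ [True]) = b * ansatz_weight K a b u"
  by (simp add: ansatz_weight_def word_coeffs_snoc site_op_def eval_coeffs_shift_b
      word_coeffs_vanish)

lemma ansatz_weight_Cons_False:
  "length v < K \<Longrightarrow> ansatz_weight K a b (False # v) = a * ansatz_weight K a b v"
  by (simp add: ansatz_weight_def word_coeffs_Cons_False eval_coeffs_shift_a word_coeffs_vanish)

lemma ansatz_weight_True_False:
  assumes "length u < K"
  shows "ansatz_weight K a b (u @ [True, False] @ v)
       = ansatz_weight K a b (u @ [True] @ v) + ansatz_weight K a b (u @ [False] @ v)"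
proof -
  have split: "word_coeffs K (u @ w @ v) = word_op K v (word_op K w (word_coeffs K u))" for w
    by (metis append_assoc word_coeffs_append)
  have "\<And>i t. K \<le> t \<Longrightarrow> word_coeffs K u i t = 0"
    using assms by (intro word_coeffs_vanish) auto
  then have "word_op K [True, False] (word_coeffs K u)
      = (\<lambda>i j. word_op K [True] (word_coeffs K u) i j + word_op K [False] (word_coeffs K u) i j)"
    by (simp add: word_op_def site_op_def opE_shift_b)
  then have "word_coeffs K (u @ [True, False] @ v)
           = (\<lambda>i j. word_coeffs K (u @ [True] @ v) i j + word_coeffs K (u @ [False] @ v) i j)"
    by (simp only: split word_op_add)
  then show ?thesis
    by (simp add: ansatz_weight_def eval_coeffs_add)
qed

lemma True_False_infix:
  "x \<noteq> [] \<Longrightarrow> hd x \<Longrightarrow> \<not> last x \<Longrightarrow> \<exists>u v. x = u @ [True, False] @ v"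
proof (induction x)
  case (Cons p y)
  then have "y \<noteq> []" by auto
  show ?case
  proof (cases "hd y")
    case False
    then show ?thesis
      using Cons.prems \<open>y \<noteq> []\<close> by (intro exI[of _ "[]"] exI[of _ "tl y"]) (cases y; simp)
  next
    case True
    then obtain u v where "y = u @ [True, False] @ v"
      using Cons \<open>y \<noteq> []\<close> by auto
    then show ?thesis
      using Cons.prems by (intro exI[of _ "True # u"] exI[of _ v]) simp
  qed
qed simp

lemma ansatz_weight_pos:
  assumes "a > 0" "b > 0" and "length x \<le> K"
  shows "ansatz_weight K a b x > 0"
  using assms(3)
proof (induction "length x" arbitrary: x rule: less_induct)
  case less
  consider "x = []" | v where "x = False # v" | u where "x = u @ [True]"
    | u v where "x = u @ [True, False] @ v"
    by (metis True_False_infix append_butlast_last_id list.collapse)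
  then show ?case
  proof cases
    case 1
    then show ?thesis by (simp add: ansatz_weight_def word_coeffs_Nil eval_coeffs_one)
  next
    case 2
    then show ?thesis using less assms by (simp add: ansatz_weight_Cons_False)
  next
    case 3
    then show ?thesis using less assms by (simp add: ansatz_weight_snoc_True)
  next
    case 4
    then show ?thesis
      using less ansatz_weight_True_False[of u K a b v] by (simp add: add_pos_pos)
  qed
qed

section \<open>Uniqueness of solutions of the global balance equations\<close>

definition rate_graph :: "'a set \<Rightarrow> ('a \<Rightarrow> 'a \<Rightarrow> real) \<Rightarrow> 'a \<Rightarrow> 'a \<Rightarrow> bool" where
  "rate_graph S q u v \<longleftrightarrow> u \<in> S \<and> v \<in> S \<and> u \<noteq> v \<and> q u v > 0"

definition global_balance :: "'a set \<Rightarrow> ('a \<Rightarrow> 'a \<Rightarrow> real) \<Rightarrow> ('a \<Rightarrow> real) \<Rightarrow> bool" where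
  "global_balance S q \<pi> \<longleftrightarrow>
     (\<forall>x\<in>S. (\<Sum>y\<in>S - {x}. \<pi> y * q y x) = \<pi> x * (\<Sum>y\<in>S - {x}. q x y))"

text \<open>Maximum principle: where \<open>\<pi>/\<mu>\<close> is maximal, the difference of the two balance
  equations is a sum of nonnegative terms, so all of them vanish.\<close>

lemma global_balance_max_ratio:
  fixes q :: "'a \<Rightarrow> 'a \<Rightarrow> real"
  assumes "finite S"
    and q_nonneg: "\<And>x y. x \<in> S \<Longrightarrow> y \<in> S \<Longrightarrow> q x y \<ge> 0"
    and \<mu>_pos: "\<And>x. x \<in> S \<Longrightarrow> \<mu> x > 0"
    and "global_balance S q \<mu>" "global_balance S q \<pi>"
    and max: "\<And>w. w \<in> S \<Longrightarrow> \<pi> w / \<mu> w \<le> \<pi> z / \<mu> z"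
    and "rate_graph S q y z"
  shows "\<pi> y / \<mu> y = \<pi> z / \<mu> z"
proof -
  define r where "r w = \<pi> w / \<mu> w" for w
  have z: "z \<in> S" and y: "y \<in> S - {z}" and "q y z > 0"
    using assms(7) by (auto simp: rate_graph_def)
  have \<pi>_eq: "\<pi> w = r w * \<mu> w" if "w \<in> S" for w
    using \<mu>_pos[OF that] by (simp add: r_def)
  have "(\<Sum>w\<in>S - {z}. \<mu> w * q w z * (r z - r w))
      = r z * (\<Sum>w\<in>S - {z}. \<mu> w * q w z) - (\<Sum>w\<in>S - {z}. \<pi> w * q w z)"
    by (simp add: algebra_simps sum_subtractf sum_distrib_left \<pi>_eq)
  also have "\<dots> = 0"
    using assms(4,5) z \<pi>_eq[OF z] by (simp add: global_balance_def)
  finally have sum_zero: "(\<Sum>w\<in>S - {z}. \<mu> w * q w z * (r z - r w)) = 0" .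
  have nonneg: "\<mu> w * q w z * (r z - r w) \<ge> 0" if "w \<in> S - {z}" for w
    using \<mu>_pos[of w] q_nonneg[of w z] max[of w] z that by (simp add: r_def)
  have "\<forall>w\<in>S - {z}. \<mu> w * q w z * (r z - r w) = 0"
    by (rule iffD1[OF sum_nonneg_eq_0_iff[OF finite_Diff[OF \<open>finite S\<close>] nonneg] sum_zero])
  from this y have "\<mu> y * q y z * (r z - r y) = 0"
    by (rule bspec)
  then show ?thesis
    using \<mu>_pos[of y] \<open>q y z > 0\<close> y by (simp add: r_def)
qed

lemma global_balance_proportional:
  fixes q :: "'a \<Rightarrow> 'a \<Rightarrow> real"
  assumes "finite S"
    and "\<And>x y. x \<in> S \<Longrightarrow> y \<in> S \<Longrightarrow> q x y \<ge> 0"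
    and \<mu>_pos: "\<And>x. x \<in> S \<Longrightarrow> \<mu> x > 0"
    and "global_balance S q \<mu>" "global_balance S q \<pi>"
    and connected: "\<And>x y. x \<in> S \<Longrightarrow> y \<in> S \<Longrightarrow> (rate_graph S q)\<^sup>*\<^sup>* x y"
  shows "\<exists>c. \<forall>x\<in>S. \<pi> x = c * \<mu> x"
proof (cases "S = {}")
  case False
  define r where "r y = \<pi> y / \<mu> y" for y
  have "Max (r ` S) \<in> r ` S"
    using \<open>finite S\<close> False by simp
  then obtain x0 where x0: "x0 \<in> S" "r x0 = Max (r ` S)"
    by auto
  have r_le: "r w \<le> r x0" if "w \<in> S" for w
    using \<open>finite S\<close> that x0(2) by simp
  have r_eq: "r y = r x0" if "y \<in> S" for y
    using connected[OF that x0(1)]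
  proof (induction rule: converse_rtranclp_induct)
    case (step y z)
    then show ?case
      using global_balance_max_ratio[OF assms(1-5), of z y] r_le by (simp add: r_def)
  qed simp
  have "\<pi> y = r x0 * \<mu> y" if "y \<in> S" for y
    using r_eq[OF that] \<mu>_pos[OF that] by (simp add: r_def divide_eq_eq)
  then show ?thesis
    by blast
qed simp

lemma global_balance_unique:
  fixes q :: "'a \<Rightarrow> 'a \<Rightarrow> real"
  assumes "finite S"
    and "\<And>x y. x \<in> S \<Longrightarrow> y \<in> S \<Longrightarrow> q x y \<ge> 0"
    and "\<And>x. x \<in> S \<Longrightarrow> \<mu> x > 0"
    and "global_balance S q \<mu>" "global_balance S q \<pi>"
    and "\<And>x y. x \<in> S \<Longrightarrow> y \<in> S \<Longrightarrow> (rate_graph S q)\<^sup>*\<^sup>* x y"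
    and "(\<Sum>y\<in>S. \<pi> y) = 1" and "x \<in> S"
  shows "\<pi> x = \<mu> x / (\<Sum>y\<in>S. \<mu> y)"
proof -
  obtain c where c: "\<forall>y\<in>S. \<pi> y = c * \<mu> y"
    using global_balance_proportional[OF assms(1-6)] by blast
  then have "c * (\<Sum>y\<in>S. \<mu> y) = 1"
    using assms(7) by (simp add: sum_distrib_left)
  then have "c = 1 / (\<Sum>y\<in>S. \<mu> y)"
    by (metis mult.commute nonzero_eq_divide_eq mult_zero_right zero_neq_one)
  then show ?thesis
    using c assms(8) by simp
qed

section \<open>Flows of the TASEP\<close>

lemma finite_tasep_states: "finite (tasep_states n)"
  using finite_lists_length_eq[of "UNIV :: bool set" n] by (simp add: tasep_states_def)

lemma sum_mult_if_single:
  fixes w :: "'a \<Rightarrow> real"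
  assumes "finite A" "\<And>y. y \<in> A \<Longrightarrow> P y \<longleftrightarrow> Q \<and> y = c" "Q \<Longrightarrow> c \<in> A"
  shows "(\<Sum>y\<in>A. w y * (if P y then r else 0)) = (if Q then w c * r else 0)"
proof -
  have "(\<Sum>y\<in>A. w y * (if P y then r else 0)) = (\<Sum>y\<in>A. if y = c then (if Q then w y * r else 0) else 0)"
    using assms(2) by (intro sum.cong) auto
  also have "\<dots> = (if Q then w c * r else 0)"
    using assms(1,3) by (auto simp: sum.delta)
  finally show ?thesis .
qed

lemma list_update_ne_self: "i < length x \<Longrightarrow> x ! i \<noteq> p \<Longrightarrow> x[i := p] \<noteq> x"
  by (metis nth_list_update_eq)

lemma list_update2_ne_self:
  assumes "Suc i < length x" "x ! i \<noteq> p"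
  shows "x[i := p, Suc i := p'] \<noteq> x"
proof
  assume "x[i := p, Suc i := p'] = x"
  then have "x[i := p, Suc i := p'] ! i = x ! i" by simp
  then show False using assms by (simp add: nth_list_update)
qed

lemma list_update_nth_eq: "x ! i = p \<Longrightarrow> x[i := p] = x"
  by (metis list_update_id)

lemma list_update2_restore:
  assumes "Suc i < length y" "y ! i = p" "y ! Suc i = q"
  shows "y[i := p', Suc i := q', i := p, Suc i := q] = y"
proof -
  have "y[i := p', Suc i := q', i := p] = y[i := p', i := p, Suc i := q']"
    by (rule list_update_swap) simp
  then show ?thesis
    using assms by (simp add: list_update_nth_eq)
qed

lemma entry_move_iff:
  assumes "length y = length x" "x \<noteq> []"
  shows "(\<not> y ! 0 \<and> x = y[0 := True]) \<longleftrightarrow> (x ! 0 \<and> y = x[0 := False])"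
  using assms by (auto simp: list_update_nth_eq)

lemma exit_move_iff:
  assumes "length y = n" "length x = n" "n \<ge> 1"
  shows "(y ! (n - 1) \<and> x = y[n - 1 := False]) \<longleftrightarrow> (\<not> x ! (n - 1) \<and> y = x[n - 1 := True])"
proof
  assume "y ! (n - 1) \<and> x = y[n - 1 := False]"
  then show "\<not> x ! (n - 1) \<and> y = x[n - 1 := True]"
    using assms(1,3) by (auto simp: list_update_nth_eq)
next
  assume "\<not> x ! (n - 1) \<and> y = x[n - 1 := True]"
  then show "y ! (n - 1) \<and> x = y[n - 1 := False]"
    using assms(2,3) by (auto simp: list_update_nth_eq)
qed

lemma hop_move_iff:
  assumes "length y = n" "length x = n" "Suc i < n"
  shows "(y ! i \<and> \<not> y ! Suc i \<and> x = y[i := False, Suc i := True])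
     \<longleftrightarrow> (\<not> x ! i \<and> x ! Suc i \<and> y = x[i := True, Suc i := False])"
proof
  assume "y ! i \<and> \<not> y ! Suc i \<and> x = y[i := False, Suc i := True]"
  then show "\<not> x ! i \<and> x ! Suc i \<and> y = x[i := True, Suc i := False]"
    using assms(1,3) by (auto simp: nth_list_update list_update2_restore)
next
  assume "\<not> x ! i \<and> x ! Suc i \<and> y = x[i := True, Suc i := False]"
  then show "y ! i \<and> \<not> y ! Suc i \<and> x = y[i := False, Suc i := True]"
    using assms(2,3) by (auto simp: nth_list_update list_update2_restore)
qed

lemma tasep_neighbour_mem:
  assumes "x \<in> tasep_states n"
  shows "i < n \<Longrightarrow> x ! i \<noteq> p \<Longrightarrow> x[i := p] \<in> tasep_states n - {x}"
    and "Suc i < n \<Longrightarrow> x ! i \<noteq> p \<Longrightarrow> x[i := p, Suc i := p'] \<in> tasep_states n - {x}"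
  using assms list_update_ne_self[of i x p] list_update2_ne_self[of i x p p']
  by (auto simp: tasep_states_def)

lemma tasep_inflow:
  fixes w :: "bool list \<Rightarrow> real"
  assumes n: "n \<ge> 1" and x: "x \<in> tasep_states n"
  shows "(\<Sum>y\<in>tasep_states n - {x}. w y * tasep_rate \<alpha> \<beta> y x)
    = (if x ! 0 then w (x[0 := False]) * \<alpha> else 0)
    + (if \<not> x ! (n - 1) then w (x[n - 1 := True]) * \<beta> else 0)
    + (\<Sum>i<n - 1. if \<not> x ! i \<and> x ! Suc i then w (x[i := True, Suc i := False]) * 1 else 0)"
proof -
  define A where "A = tasep_states n - {x}"
  have "finite A"
    by (simp add: A_def finite_tasep_states)
  have lx: "length x = n" and ly: "\<And>y. y \<in> A \<Longrightarrow> length y = n"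
    using x by (auto simp: A_def tasep_states_def)
  note mem = tasep_neighbour_mem[OF x, folded A_def]
  have "(\<Sum>y\<in>A. w y * tasep_rate \<alpha> \<beta> y x)
      = (\<Sum>y\<in>A. w y * (if \<not> y ! 0 \<and> x = y[0 := True] then \<alpha> else 0))
      + (\<Sum>y\<in>A. w y * (if y ! (n - 1) \<and> x = y[n - 1 := False] then \<beta> else 0))
      + (\<Sum>i<n - 1. \<Sum>y\<in>A. w y * (if y ! i \<and> \<not> y ! Suc i \<and> x = y[i := False, Suc i := True]
                                    then 1 else 0))"
    by (simp add: tasep_rate_def ly distrib_left sum_distrib_left sum.distrib cong: sum.cong)
      (rule sum.swap)
  also have "(\<Sum>y\<in>A. w y * (if \<not> y ! 0 \<and> x = y[0 := True] then \<alpha> else 0))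
      = (if x ! 0 then w (x[0 := False]) * \<alpha> else 0)"
  proof (rule sum_mult_if_single[OF \<open>finite A\<close>])
    show "(\<not> y ! 0 \<and> x = y[0 := True]) \<longleftrightarrow> x ! 0 \<and> y = x[0 := False]" if "y \<in> A" for y
      by (rule entry_move_iff) (use that n lx ly in auto)
    show "x ! 0 \<Longrightarrow> x[0 := False] \<in> A"
      using n mem(1)[of 0 False] by simp
  qed
  also have "(\<Sum>y\<in>A. w y * (if y ! (n - 1) \<and> x = y[n - 1 := False] then \<beta> else 0))
      = (if \<not> x ! (n - 1) then w (x[n - 1 := True]) * \<beta> else 0)"
  proof (rule sum_mult_if_single[OF \<open>finite A\<close>])
    show "(y ! (n - 1) \<and> x = y[n - 1 := False]) \<longleftrightarrow> \<not> x ! (n - 1) \<and> y = x[n - 1 := True]"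
      if "y \<in> A" for y
      by (rule exit_move_iff) (use that n lx ly in auto)
    show "\<not> x ! (n - 1) \<Longrightarrow> x[n - 1 := True] \<in> A"
      using n mem(1)[of "n - 1" True] by simp
  qed
  also have "(\<Sum>i<n - 1. \<Sum>y\<in>A. w y * (if y ! i \<and> \<not> y ! Suc i \<and> x = y[i := False, Suc i := True]
                                      then 1 else 0))
      = (\<Sum>i<n - 1. if \<not> x ! i \<and> x ! Suc i then w (x[i := True, Suc i := False]) * 1 else 0)"
  proof (rule sum.cong[OF refl], rule sum_mult_if_single[OF \<open>finite A\<close>])
    fix i assume "i \<in> {..<n - 1}"
    then show "(y ! i \<and> \<not> y ! Suc i \<and> x = y[i := False, Suc i := True])
        \<longleftrightarrow> (\<not> x ! i \<and> x ! Suc i) \<and> y = x[i := True, Suc i := False]" if "y \<in> A" for y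
      using hop_move_iff[of y n x i] that lx ly by simp
    show "\<not> x ! i \<and> x ! Suc i \<Longrightarrow> x[i := True, Suc i := False] \<in> A"
      using \<open>i \<in> {..<n - 1}\<close> mem(2)[of i True False] by simp
  qed
  finally show ?thesis
    by (simp add: A_def)
qed

lemma tasep_outflow:
  assumes n: "n \<ge> 1" and x: "x \<in> tasep_states n"
  shows "(\<Sum>y\<in>tasep_states n - {x}. tasep_rate \<alpha> \<beta> x y)
    = (if \<not> x ! 0 then \<alpha> else 0)
    + (if x ! (n - 1) then \<beta> else 0)
    + (\<Sum>i<n - 1. if x ! i \<and> \<not> x ! Suc i then 1 else 0)"
proof -
  define A where "A = tasep_states n - {x}"
  have "finite A"
    by (simp add: A_def finite_tasep_states)
  have lx: "length x = n"
    using x by (simp add: tasep_states_def)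
  note mem = tasep_neighbour_mem[OF x, folded A_def]
  have single: "(\<Sum>y\<in>A. (if Q \<and> y = c then r else 0)) = (if Q then r else (0::real))"
    if "Q \<Longrightarrow> c \<in> A" for Q c r
    using that \<open>finite A\<close> by (cases Q) (simp_all add: sum.delta)
  have hop: "(\<Sum>y\<in>A. if x ! i \<and> \<not> x ! Suc i \<and> y = x[i := False, Suc i := True] then 1 else 0)
      = (if x ! i \<and> \<not> x ! Suc i then 1 else (0::real))" if "i < n - 1" for i
    using single[of "x ! i \<and> \<not> x ! Suc i" "x[i := False, Suc i := True]" 1] mem(2)[of i False True]
      that by simp
  have "(\<Sum>y\<in>A. tasep_rate \<alpha> \<beta> x y)
      = (\<Sum>y\<in>A. (if \<not> x ! 0 \<and> y = x[0 := True] then \<alpha> else 0))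
      + (\<Sum>y\<in>A. (if x ! (n - 1) \<and> y = x[n - 1 := False] then \<beta> else 0))
      + (\<Sum>i<n - 1. \<Sum>y\<in>A. (if x ! i \<and> \<not> x ! Suc i \<and> y = x[i := False, Suc i := True]
                              then 1 else 0))"
    unfolding tasep_rate_def lx sum.distrib by (subst (2) sum.swap) (rule refl)
  also have "(\<Sum>y\<in>A. (if \<not> x ! 0 \<and> y = x[0 := True] then \<alpha> else 0)) = (if \<not> x ! 0 then \<alpha> else 0)"
    by (rule single) (use n mem(1)[of 0 True] in simp)
  also have "(\<Sum>y\<in>A. (if x ! (n - 1) \<and> y = x[n - 1 := False] then \<beta> else 0))
      = (if x ! (n - 1) then \<beta> else 0)"
    by (rule single) (use n mem(1)[of "n - 1" False] in simp)
  also have "(\<Sum>i<n - 1. \<Sum>y\<in>A. (if x ! i \<and> \<not> x ! Suc i \<and> y = x[i := False, Suc i := True]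
                              then 1 else 0))
      = (\<Sum>i<n - 1. if x ! i \<and> \<not> x ! Suc i then 1 else (0::real))"
    by (rule sum.cong[OF refl], rule hop) simp
  finally show ?thesis
    by (simp add: A_def)
qed

section \<open>The matrix-ansatz weights balance the flows\<close>

definition tasep_weight :: "nat \<Rightarrow> real \<Rightarrow> real \<Rightarrow> bool list \<Rightarrow> real" where
  "tasep_weight n \<alpha> \<beta> = ansatz_weight n (1 / \<alpha>) (1 / \<beta>)"

definition delete_nth :: "nat \<Rightarrow> 'a list \<Rightarrow> 'a list" where
  "delete_nth i x = take i x @ drop (Suc i) x"

text \<open>The net flow into \<open>x\<close> telescopes: writing \<open>h\<^sub>i\<close> for \<open>hat_flux n \<alpha> \<beta> i x\<close>, the entry,
  the exit and the bond \<open>(i, i+1)\<close> contribute \<open>-h\<^sub>0\<close>, \<open>h\<^sub>n\<^sub>-\<^sub>1\<close> and \<open>h\<^sub>i - h\<^sub>i\<^sub>+\<^sub>1\<close>; the bond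
  identity is \<open>DE = D + E\<close>.\<close>

definition hat_flux :: "nat \<Rightarrow> real \<Rightarrow> real \<Rightarrow> nat \<Rightarrow> bool list \<Rightarrow> real" where
  "hat_flux n \<alpha> \<beta> i x = (if x ! i then -1 else 1) * tasep_weight n \<alpha> \<beta> (delete_nth i x)"

lemma hat_flux_bond:
  assumes "length x = n" and "Suc i < n"
  shows "(if \<not> x ! i \<and> x ! Suc i then tasep_weight n \<alpha> \<beta> (x[i := True, Suc i := False]) * 1 else 0)
       - tasep_weight n \<alpha> \<beta> x * (if x ! i \<and> \<not> x ! Suc i then 1 else 0)
       = hat_flux n \<alpha> \<beta> i x - hat_flux n \<alpha> \<beta> (Suc i) x"
proof -
  define u where "u = take i x"
  define v where "v = drop (Suc (Suc i)) x"
  have x: "x = u @ x ! i # x ! Suc i # v"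
    using assms by (simp add: u_def v_def Cons_nth_drop_Suc)
  have "length u = i"
    using assms by (simp add: u_def)
  then have "delete_nth i x = u @ [x ! Suc i] @ v" "delete_nth (Suc i) x = u @ [x ! i] @ v"
      "x[i := True, Suc i := False] = u @ [True, False] @ v"
    by (subst x; simp add: delete_nth_def list_update_append)+
  moreover have "tasep_weight n \<alpha> \<beta> (u @ [True, False] @ v)
      = tasep_weight n \<alpha> \<beta> (u @ [True] @ v) + tasep_weight n \<alpha> \<beta> (u @ [False] @ v)"
    unfolding tasep_weight_def
    by (rule ansatz_weight_True_False) (use \<open>length u = i\<close> assms(2) in simp)
  ultimately show ?thesis
    by (cases "x ! i"; cases "x ! Suc i") (auto simp: hat_flux_def, subst x, simp)+
qed

lemma hat_flux_entry:
  assumes "length x = n" "n \<ge> 1" "\<alpha> \<noteq> 0"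
  shows "(if x ! 0 then tasep_weight n \<alpha> \<beta> (x[0 := False]) * \<alpha> else 0)
       - tasep_weight n \<alpha> \<beta> x * (if \<not> x ! 0 then \<alpha> else 0) = - hat_flux n \<alpha> \<beta> 0 x"
proof -
  obtain p v where x: "x = p # v"
    using assms by (cases x) auto
  have "tasep_weight n \<alpha> \<beta> (False # v) = (1 / \<alpha>) * tasep_weight n \<alpha> \<beta> v"
    using assms x by (simp add: tasep_weight_def ansatz_weight_Cons_False)
  then show ?thesis
    using assms by (cases p) (auto simp: hat_flux_def delete_nth_def x)
qed

lemma hat_flux_exit:
  assumes "length x = n" "n \<ge> 1" "\<beta> \<noteq> 0"
  shows "(if \<not> x ! (n - 1) then tasep_weight n \<alpha> \<beta> (x[n - 1 := True]) * \<beta> else 0)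
       - tasep_weight n \<alpha> \<beta> x * (if x ! (n - 1) then \<beta> else 0) = hat_flux n \<alpha> \<beta> (n - 1) x"
proof -
  obtain u p where x: "x = u @ [p]"
    using assms by (metis append_butlast_last_id list.size(3) not_one_le_zero)
  have lu: "length u = n - 1"
    using assms x by simp
  have "tasep_weight n \<alpha> \<beta> (u @ [True]) = (1 / \<beta>) * tasep_weight n \<alpha> \<beta> u"
    using assms lu by (simp add: tasep_weight_def ansatz_weight_snoc_True)
  moreover have "x ! (n - 1) = p" "x[n - 1 := True] = u @ [True]" "delete_nth (n - 1) x = u"
    using lu x by (simp_all add: nth_append list_update_append delete_nth_def)
  ultimately show ?thesis
    using assms by (cases p) (auto simp: hat_flux_def x)
qed

lemma tasep_weight_global_balance:
  assumes "n \<ge> 1" "\<alpha> \<noteq> 0" "\<beta> \<noteq> 0"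
  shows "global_balance (tasep_states n) (tasep_rate \<alpha> \<beta>) (tasep_weight n \<alpha> \<beta>)"
  unfolding global_balance_def
proof
  fix x assume x: "x \<in> tasep_states n"
  then have lx: "length x = n"
    by (simp add: tasep_states_def)
  let ?M = "tasep_weight n \<alpha> \<beta>" and ?h = "\<lambda>i. hat_flux n \<alpha> \<beta> i x"
  have "(\<Sum>y\<in>tasep_states n - {x}. ?M y * tasep_rate \<alpha> \<beta> y x)
         - ?M x * (\<Sum>y\<in>tasep_states n - {x}. tasep_rate \<alpha> \<beta> x y)
       = ((if x ! 0 then ?M (x[0 := False]) * \<alpha> else 0) - ?M x * (if \<not> x ! 0 then \<alpha> else 0))
       + ((if \<not> x ! (n - 1) then ?M (x[n - 1 := True]) * \<beta> else 0)
          - ?M x * (if x ! (n - 1) then \<beta> else 0))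
       + (\<Sum>i<n - 1. (if \<not> x ! i \<and> x ! Suc i then ?M (x[i := True, Suc i := False]) * 1 else 0)
            - ?M x * (if x ! i \<and> \<not> x ! Suc i then 1 else 0))"
    unfolding tasep_inflow[OF assms(1) x] tasep_outflow[OF assms(1) x]
    by (simp add: algebra_simps sum_subtractf sum_distrib_left)
  also have "\<dots> = - ?h 0 + ?h (n - 1) + (\<Sum>i<n - 1. ?h i - ?h (Suc i))"
    using hat_flux_entry[OF lx] hat_flux_exit[OF lx] hat_flux_bond[OF lx] assms
    by (simp add: less_diff_conv)
  also have "\<dots> = 0"
    using sum_lessThan_telescope'[of ?h "n - 1"] by simp
  finally show "(\<Sum>y\<in>tasep_states n - {x}. ?M y * tasep_rate \<alpha> \<beta> y x)
      = ?M x * (\<Sum>y\<in>tasep_states n - {x}. tasep_rate \<alpha> \<beta> x y)"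
    by simp
qed

section \<open>Irreducibility\<close>

lemma tasep_rate_nonneg: "\<alpha> \<ge> 0 \<Longrightarrow> \<beta> \<ge> 0 \<Longrightarrow> tasep_rate \<alpha> \<beta> x y \<ge> 0"
  by (auto simp: tasep_rate_def intro!: add_nonneg_nonneg sum_nonneg)

context
  fixes n :: nat and \<alpha> \<beta> :: real
  assumes n: "n \<ge> 1" and \<alpha>: "\<alpha> > 0" and \<beta>: "\<beta> > 0"
begin

abbreviation tasep_step :: "bool list \<Rightarrow> bool list \<Rightarrow> bool" where
  "tasep_step \<equiv> rate_graph (tasep_states n) (tasep_rate \<alpha> \<beta>)"

lemma tasep_step_entry:
  assumes "length x = n" "\<not> x ! 0"
  shows "tasep_step x (x[0 := True])"
proof -
  have "tasep_rate \<alpha> \<beta> x (x[0 := True]) \<ge> \<alpha>"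
    using assms \<alpha> \<beta> by (auto simp: tasep_rate_def intro!: add_nonneg_nonneg sum_nonneg)
  then show ?thesis
    using assms n \<alpha> list_update_ne_self[of 0 x True] by (auto simp: rate_graph_def tasep_states_def)
qed

lemma tasep_step_exit:
  assumes "length x = n" "x ! (n - 1)"
  shows "tasep_step x (x[n - 1 := False])"
proof -
  have "tasep_rate \<alpha> \<beta> x (x[n - 1 := False]) \<ge> \<beta>"
    using assms \<alpha> \<beta> by (auto simp: tasep_rate_def intro!: add_nonneg_nonneg sum_nonneg)
  then show ?thesis
    using assms n \<beta> list_update_ne_self[of "n - 1" x False]
    by (auto simp: rate_graph_def tasep_states_def)
qed

lemma tasep_step_hop:
  assumes "length x = n" "Suc i < n" "x ! i" "\<not> x ! Suc i"
  shows "tasep_step x (x[i := False, Suc i := True])"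
proof -
  let ?y = "x[i := False, Suc i := True]"
  have "(\<Sum>j<length x - 1. if x ! j \<and> \<not> x ! Suc j \<and> ?y = x[j := False, Suc j := True]
                            then 1 else 0)
      \<ge> (if x ! i \<and> \<not> x ! Suc i \<and> ?y = x[i := False, Suc i := True] then 1 else (0::real))"
    by (rule member_le_sum) (use assms in auto)
  then have "(\<Sum>j<length x - 1. if x ! j \<and> \<not> x ! Suc j \<and> ?y = x[j := False, Suc j := True]
                                 then 1 else 0) \<ge> (1::real)"
    using assms by simp
  then have "tasep_rate \<alpha> \<beta> x ?y \<ge> 1"
    unfolding tasep_rate_def using \<alpha> \<beta> by (smt (verit))
  then show ?thesis
    using assms list_update2_ne_self[of i x False True] by (auto simp: rate_graph_def tasep_states_def)
qed

lemma tasep_steps_hop_run: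
  "length (w @ True # replicate p False @ z) = n \<Longrightarrow>
   tasep_step\<^sup>*\<^sup>* (w @ True # replicate p False @ z) (w @ replicate p False @ True # z)"
proof (induction p arbitrary: w)
  case (Suc p)
  let ?x = "w @ True # False # replicate p False @ z"
  have "?x[length w := False, Suc (length w) := True] = (w @ [False]) @ True # replicate p False @ z"
    by (simp add: list_update_append)
  then have "tasep_step ?x ((w @ [False]) @ True # replicate p False @ z)"
    using tasep_step_hop[of ?x "length w"] Suc.prems by (simp add: nth_append)
  moreover have "tasep_step\<^sup>*\<^sup>* ((w @ [False]) @ True # replicate p False @ z)
                               ((w @ [False]) @ replicate p False @ True # z)"
    by (rule Suc.IH) (use Suc.prems in simp)
  ultimately show ?case
    by (simp add: replicate_app_Cons_same)
qed simp

lemma replicate_False_if_True_notin: "True \<notin> set ys \<Longrightarrow> ys = replicate (length ys) False"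
  by (induction ys) auto

lemma tasep_steps_to_empty:
  "x \<in> tasep_states n \<Longrightarrow> tasep_step\<^sup>*\<^sup>* x (replicate n False)"
proof (induction "length (filter id x)" arbitrary: x rule: less_induct)
  case less
  have lx: "length x = n"
    using less.prems by (simp add: tasep_states_def)
  show ?case
  proof (cases "True \<in> set x")
    case False
    then show ?thesis using replicate_False_if_True_notin[of x] lx by simp
  next
    case True
    then obtain w ys where x: "x = w @ True # ys" and "True \<notin> set ys"
      using split_list_last by metis
    define p where "p = length ys"
    have ys: "ys = replicate p False"
      using replicate_False_if_True_notin[OF \<open>True \<notin> set ys\<close>] by (simp add: p_def)
    define u where "u = w @ replicate p False"
    have "tasep_step\<^sup>*\<^sup>* x (u @ [True])"
      using tasep_steps_hop_run[of w p "[]"] lx x ys by (simp add: u_def)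
    moreover have lu: "length (u @ [True]) = n"
      using lx x ys by (simp add: u_def)
    then have "n - 1 = length u"
      by simp
    then have "tasep_step (u @ [True]) (u @ [False])"
      using tasep_step_exit[OF lu] by simp
    moreover have "u @ [False] = w @ replicate (Suc p) False"
      by (simp add: u_def replicate_append_same)
    moreover have "tasep_step\<^sup>*\<^sup>* (w @ replicate (Suc p) False) (replicate n False)"
      by (rule less.hyps) (use lx x ys in \<open>auto simp: tasep_states_def\<close>)
    ultimately show ?thesis
      by (metis rtranclp.rtrancl_into_rtrancl rtranclp_trans)
  qed
qed

lemma tasep_steps_from_empty:
  "x \<in> tasep_states n \<Longrightarrow> tasep_step\<^sup>*\<^sup>* (replicate n False) x"
proof (induction "length (filter id x)" arbitrary: x rule: less_induct)
  case less
  have lx: "length x = n"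
    using less.prems by (simp add: tasep_states_def)
  show ?case
  proof (cases "True \<in> set x")
    case False
    then show ?thesis using replicate_False_if_True_notin[of x] lx by simp
  next
    case True
    then obtain ys w where x: "x = ys @ True # w" and "True \<notin> set ys"
      using split_list_first by metis
    define p where "p = length ys"
    have ys: "ys = replicate p False"
      using replicate_False_if_True_notin[OF \<open>True \<notin> set ys\<close>] by (simp add: p_def)
    let ?y = "replicate (Suc p) False @ w"
    have ly: "length ?y = n"
      using lx x ys by simp
    have "tasep_step\<^sup>*\<^sup>* (replicate n False) ?y"
      by (rule less.hyps) (use lx x ys in \<open>auto simp: tasep_states_def\<close>)
    moreover have "tasep_step ?y (True # replicate p False @ w)"
      using tasep_step_entry[OF ly] by simp
    moreover have "tasep_step\<^sup>*\<^sup>* (True # replicate p False @ w) x"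
      using tasep_steps_hop_run[of "[]" p w] ly x ys by simp
    ultimately show ?thesis
      by (meson rtranclp.rtrancl_into_rtrancl rtranclp_trans)
  qed
qed

lemma tasep_connected:
  "x \<in> tasep_states n \<Longrightarrow> y \<in> tasep_states n \<Longrightarrow> tasep_step\<^sup>*\<^sup>* x y"
  using tasep_steps_to_empty tasep_steps_from_empty by (meson rtranclp_trans)

end

lemma tasep_weight_pos: "\<alpha> > 0 \<Longrightarrow> \<beta> > 0 \<Longrightarrow> x \<in> tasep_states n \<Longrightarrow> tasep_weight n \<alpha> \<beta> x > 0"
  by (simp add: tasep_weight_def ansatz_weight_pos tasep_states_def)

lemma tasep_stationary_eq_weight:
  assumes "n \<ge> 1" "\<alpha> > 0" "\<beta> > 0" "tasep_stationary n \<alpha> \<beta> \<pi>" "x \<in> tasep_states n"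
  shows "\<pi> x = tasep_weight n \<alpha> \<beta> x / (\<Sum>y\<in>tasep_states n. tasep_weight n \<alpha> \<beta> y)"
proof (rule global_balance_unique)
  show "global_balance (tasep_states n) (tasep_rate \<alpha> \<beta>) \<pi>" "(\<Sum>y\<in>tasep_states n. \<pi> y) = 1"
    using assms(4) by (simp_all add: tasep_stationary_def global_balance_def)
qed (use assms finite_tasep_states tasep_rate_nonneg tasep_weight_pos
       tasep_weight_global_balance tasep_connected in auto)

section \<open>Binomial identities behind \<open>N\<^sub>m\<^sub>,\<^sub>k\<close>\<close>

definition multichoose :: "int \<Rightarrow> int \<Rightarrow> real" where
  "multichoose c p = ibinom (c + p - 1) p"

lemma multichoose_neg: "p < 0 \<Longrightarrow> multichoose c p = 0"
  by (simp add: multichoose_def ibinom_def)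

lemma multichoose_0_right [simp]: "multichoose c 0 = 1"
  by (simp add: multichoose_def ibinom_def)

lemma ibinom_of_nat: "ibinom (int N) (int r) = real (N choose r)"
  by (simp add: ibinom_def binomial_gbinomial)

lemma multichoose_0_left: "multichoose 0 q = (if q = 0 then 1 else 0)"
proof (cases "q > 0")
  case True
  then obtain r where r: "q = int (Suc r)"
    by (metis gr0_implies_Suc pos_int_cases)
  then have "multichoose 0 q = ibinom (int r) (int (Suc r))"
    by (simp add: multichoose_def)
  also have "\<dots> = 0"
    by (simp only: ibinom_of_nat) simp
  finally show ?thesis
    using True by simp
qed (auto simp: multichoose_neg)

lemma multichoose_pascal: "multichoose c p = multichoose (c - 1) p + multichoose c (p - 1)"
proof (cases "p \<ge> 1")
  case True
  define r where "r = nat (p - 1)"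
  have np: "nat p = Suc r" "nat (p - 1) = r"
    using True by (simp_all add: r_def)
  define a where "a = real_of_int (c + p - 2)"
  have "multichoose c p = (a + 1) gchoose Suc r"
    using True np by (simp add: multichoose_def ibinom_def a_def add.commute)
  also have "\<dots> = (a gchoose r) + (a gchoose Suc r)"
    by (rule gbinomial_Suc_Suc)
  finally show ?thesis
    using True np by (simp add: multichoose_def ibinom_def a_def)
next
  case False
  then show ?thesis by (cases "p = 0") (auto simp: multichoose_neg)
qed

lemma sum_multichoose: "(\<Sum>q\<le>Q. multichoose c (int q)) = multichoose (c + 1) (int Q)"
proof (induction Q)
  case (Suc Q)
  then show ?case
    using multichoose_pascal[of "c + 1" "int (Suc Q)"] by simp
qed simp

lemma sum_multichoose_pred: "(\<Sum>q\<le>Q. multichoose c (int q - 1)) = multichoose (c + 1) (int Q - 1)"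
proof (induction Q)
  case (Suc Q)
  then show ?case
    using multichoose_pascal[of "c + 1" "int (Suc Q) - 1"] by simp
qed (simp add: multichoose_neg)

definition Nmk_term :: "nat \<Rightarrow> nat \<Rightarrow> int \<Rightarrow> int \<Rightarrow> real" where
  "Nmk_term m k p q = ibinom (int k + p - 1) p * ibinom (int m + q - 1) q
                    - ibinom (int k + p - 1) (p - 1) * ibinom (int m + q - 1) (q - 1)"

lemma Nmk_term_multichoose:
  "Nmk_term m k p q = multichoose (int k) p * multichoose (int m) q
                    - multichoose (int k + 1) (p - 1) * multichoose (int m + 1) (q - 1)"
  by (simp add: Nmk_term_def multichoose_def algebra_simps)

lemma Nmk_term_neg: "p < 0 \<or> q < 0 \<Longrightarrow> Nmk_term m k p q = 0"
  by (auto simp: Nmk_term_multichoose multichoose_neg)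

lemma Nmk_term_0_left: "p \<le> 0 \<Longrightarrow> Nmk_term 0 k p q = (if p = 0 \<and> q = 0 then 1 else 0)"
  by (cases "p = 0") (auto simp: Nmk_term_multichoose multichoose_neg multichoose_0_left)

lemma sum_Nmk_term:
  "(\<Sum>q\<le>Q. Nmk_term m k p (int q))
   = multichoose (int k) p * multichoose (int m + 1) (int Q)
   - multichoose (int k + 1) (p - 1) * multichoose (int m + 2) (int Q - 1)"
  by (simp add: Nmk_term_multichoose sum_subtractf flip: sum_distrib_left)
    (simp add: sum_multichoose sum_multichoose_pred add.assoc)

lemma Nmk_term_diagonal:
  assumes "m \<ge> 1" "k \<ge> 1"
  shows "Nmk_term m k (int m) (int k) = 0"
proof -
  define N where "N = m + k - 1"
  have binom: "multichoose (int c) (int r) = real (N choose r)" if "c + r = N + 1" for c r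
  proof -
    have "int c + int r - 1 = int N"
      using that by simp
    then show ?thesis
      by (simp add: multichoose_def ibinom_of_nat)
  qed
  have "multichoose (int k) (int m) = real (N choose (k - 1))"
    using binom[of k m] binomial_symmetric[of m N] assms by (simp add: N_def)
  moreover have "multichoose (int m) (int k) = real (N choose (m - 1))"
    using binom[of m k] binomial_symmetric[of k N] assms by (simp add: N_def)
  moreover have "multichoose (int k + 1) (int m - 1) = real (N choose (m - 1))"
    using binom[of "k + 1" "m - 1"] assms by (simp add: N_def of_nat_diff add.commute)
  moreover have "multichoose (int m + 1) (int k - 1) = real (N choose (k - 1))"
    using binom[of "m + 1" "k - 1"] assms by (simp add: N_def of_nat_diff add.commute)
  ultimately show ?thesis
    by (simp add: Nmk_term_multichoose)
qed

lemma Nmk_term_pascal: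
  assumes "k \<ge> 1"
  shows "Nmk_term m k P Q = Nmk_term m (k - 1) P Q
    + (multichoose (int k) (P - 1) * multichoose (int m) Q
       - multichoose (int k + 1) (P - 2) * multichoose (int m + 1) (Q - 1))"
proof -
  have "int (k - 1) = int k - 1"
    using assms by simp
  moreover have "multichoose (int k + 1) (P - 1)
      = multichoose (int k) (P - 1) + multichoose (int k + 1) (P - 2)"
    using multichoose_pascal[of "int k + 1" "P - 1"] by simp
  ultimately show ?thesis
    using multichoose_pascal[of "int k" P] by (simp add: Nmk_term_multichoose algebra_simps)
qed

section \<open>Summing the weights over a particle number\<close>

definition tasep_class :: "nat \<Rightarrow> nat \<Rightarrow> bool list set" where
  "tasep_class m k = {x. length x = m + k \<and> length (filter id x) = k}"

definition class_coeffs :: "nat \<Rightarrow> nat \<Rightarrow> nat \<Rightarrow> coeffs" where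
  "class_coeffs K m k i j = (\<Sum>x\<in>tasep_class m k. word_coeffs K x i j)"

definition Nmk_coeffs :: "nat \<Rightarrow> nat \<Rightarrow> coeffs" where
  "Nmk_coeffs m k i j = Nmk_term m k (int m - int i) (int k - int j)"

lemma finite_tasep_class: "finite (tasep_class m k)"
  by (rule finite_subset[OF _ finite_tasep_states[of "m + k"]])
    (auto simp: tasep_class_def tasep_states_def)

lemma tasep_class_decomp:
  assumes "m + k \<ge> 1"
  shows "tasep_class m k = (if k \<ge> 1 then (\<lambda>x. x @ [True]) ` tasep_class m (k - 1) else {})
                         \<union> (if m \<ge> 1 then (\<lambda>x. x @ [False]) ` tasep_class (m - 1) k else {})"
proof -
  have snoc_True: "x @ [True] \<in> tasep_class m k \<longleftrightarrow> k \<ge> 1 \<and> x \<in> tasep_class m (k - 1)" for x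
    by (auto simp: tasep_class_def)
  have snoc_False: "x @ [False] \<in> tasep_class m k \<longleftrightarrow> m \<ge> 1 \<and> x \<in> tasep_class (m - 1) k" for x
    using length_filter_le[of id x] by (auto simp: tasep_class_def simp del: length_filter_le)
  show ?thesis
  proof (intro set_eqI iffI)
    fix x assume x: "x \<in> tasep_class m k"
    then have "x \<noteq> []"
      using assms by (auto simp: tasep_class_def)
    then obtain u p where "x = u @ [p]"
      by (metis rev_exhaust)
    then show "x \<in> (if k \<ge> 1 then (\<lambda>x. x @ [True]) ` tasep_class m (k - 1) else {})
                  \<union> (if m \<ge> 1 then (\<lambda>x. x @ [False]) ` tasep_class (m - 1) k else {})"
      using x snoc_True[of u] snoc_False[of u] by (cases p) auto
  qed (use snoc_True snoc_False in \<open>auto split: if_splits\<close>)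
qed

lemma class_coeffs_rec:
  assumes "m + k \<ge> 1"
  shows "class_coeffs K m k i j = (if k \<ge> 1 then shift_b (class_coeffs K m (k - 1)) i j else 0)
                                + (if m \<ge> 1 then opE K (class_coeffs K (m - 1) k) i j else 0)"
proof -
  let ?A = "if k \<ge> 1 then (\<lambda>x. x @ [True]) ` tasep_class m (k - 1) else {}"
  let ?B = "if m \<ge> 1 then (\<lambda>x. x @ [False]) ` tasep_class (m - 1) k else {}"
  have "class_coeffs K m k i j = (\<Sum>x\<in>?A. word_coeffs K x i j) + (\<Sum>x\<in>?B. word_coeffs K x i j)"
    unfolding class_coeffs_def tasep_class_decomp[OF assms]
    by (rule sum.union_disjoint) (auto simp: finite_tasep_class)
  moreover have "(\<Sum>x\<in>tasep_class m' k'. shift_b (word_coeffs K x) i j)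
                = shift_b (class_coeffs K m' k') i j" for m' k'
    by (simp add: shift_b_def class_coeffs_def)
  moreover have "(\<Sum>x\<in>tasep_class m' k'. opE K (word_coeffs K x) i j)
                = opE K (class_coeffs K m' k') i j" for m' k'
    by (simp add: opE_def class_coeffs_def sum.swap[of _ _ "tasep_class m' k'"])
  ultimately show ?thesis
    by (simp add: sum.reindex inj_on_def word_coeffs_snoc site_op_def)
qed

lemma sum_Nmk_term_reflect:
  assumes "k \<le> K"
  shows "(\<Sum>j'=j..K. Nmk_term m k p (int k - int j'))
       = (if j \<le> k then (\<Sum>q\<le>k - j. Nmk_term m k p (int q)) else 0)"
proof (cases "j \<le> k")
  case True
  have "{j..K} = {j..k} \<union> {Suc k..K}"
    using True assms by auto
  then have "(\<Sum>j'=j..K. Nmk_term m k p (int k - int j'))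
      = (\<Sum>j'=j..k. Nmk_term m k p (int k - int j'))"
    by (simp add: sum.union_disjoint Nmk_term_neg)
  also have "\<dots> = (\<Sum>q\<le>k - j. Nmk_term m k p (int q))"
    by (rule sum.reindex_bij_witness[of _ "\<lambda>q. k - q" "\<lambda>j'. k - j'"]) (use True in \<open>auto simp: of_nat_diff\<close>)
  finally show ?thesis
    using True by simp
qed (auto intro!: sum.neutral simp: Nmk_term_neg)

lemma opE_Nmk_coeffs_col0:
  assumes "k \<le> K" "i \<ge> 1"
  shows "opE K (Nmk_coeffs m k) i 0 = Nmk_coeffs (Suc m) k i 0"
proof -
  have "opE K (Nmk_coeffs m k) i 0 = (\<Sum>j'=0..K. Nmk_term m k (int m - int i + 1) (int k - int j'))"
    using assms by (simp add: opE_def Nmk_coeffs_def atLeast0AtMost of_nat_diff algebra_simps)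
  also have "\<dots> = (\<Sum>q\<le>k. Nmk_term m k (int m - int i + 1) (int q))"
    using sum_Nmk_term_reflect[OF assms(1), where j = 0] by simp
  also have "\<dots> = Nmk_term (Suc m) k (int (Suc m) - int i) (int k)"
    unfolding sum_Nmk_term by (simp add: Nmk_term_multichoose algebra_simps)
  finally show ?thesis
    by (simp add: Nmk_coeffs_def)
qed

lemma opE_Nmk_coeffs:
  assumes "k \<le> K" "j \<ge> 1"
  shows "opE K (Nmk_coeffs m k) i j
       = (if j \<le> k then multichoose (int k) (int m - int i) * multichoose (int m + 1) (int k - int j)
            - multichoose (int k + 1) (int m - int i - 1) * multichoose (int m + 2) (int k - int j - 1)
          else 0)"
proof -
  have "opE K (Nmk_coeffs m k) i j = (\<Sum>j'=j..K. Nmk_term m k (int m - int i) (int k - int j'))"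
    using assms by (simp add: opE_def Nmk_coeffs_def)
  also have "\<dots> = (if j \<le> k then (\<Sum>q\<le>k - j. Nmk_term m k (int m - int i) (int q)) else 0)"
    by (rule sum_Nmk_term_reflect[OF assms(1)])
  finally show ?thesis
    by (simp add: sum_Nmk_term of_nat_diff)
qed

lemma Nmk_coeffs_rec:
  assumes "m + k \<ge> 1" "k \<le> K"
  shows "Nmk_coeffs m k i j = (if k \<ge> 1 then shift_b (Nmk_coeffs m (k - 1)) i j else 0)
                            + (if m \<ge> 1 then opE K (Nmk_coeffs (m - 1) k) i j else 0)"
proof -
  consider "i = 0" "j = 0" | "i \<ge> 1" "j = 0" | "j \<ge> 1" "j > k" | "j \<ge> 1" "j \<le> k"
    by linarith
  then show ?thesis
  proof cases
    case 1
    have "Nmk_term m k (int m) (int k) = 0"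
      using assms(1) Nmk_term_diagonal[of m k]
      by (cases "m = 0"; cases "k = 0") (auto simp: Nmk_term_multichoose multichoose_neg multichoose_0_left)
    then show ?thesis
      using 1 by (simp add: Nmk_coeffs_def shift_b_def opE_def)
  next
    case 2
    then show ?thesis
      using opE_Nmk_coeffs_col0[OF assms(2), of i "m - 1"]
      by (cases "m = 0") (simp_all add: Nmk_coeffs_def shift_b_def Nmk_term_neg)
  next
    case 3
    then show ?thesis
      using opE_Nmk_coeffs[OF assms(2), of j "m - 1" i]
      by (simp add: Nmk_coeffs_def shift_b_def Nmk_term_neg)
  next
    case 4
    then have "k \<ge> 1" "int (k - 1) - int (j - 1) = int k - int j"
      by auto
    moreover have "Nmk_term 0 (k - 1) (- int i) (int k - int j) = Nmk_term 0 k (- int i) (int k - int j)"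
      by (simp add: Nmk_term_0_left)
    ultimately show ?thesis
      using 4 opE_Nmk_coeffs[OF assms(2), of j "m - 1" i]
        Nmk_term_pascal[of k m "int m - int i" "int k - int j"]
      by (cases "m = 0") (auto simp: Nmk_coeffs_def shift_b_def of_nat_diff algebra_simps)
  qed
qed

lemma class_coeffs_eq_Nmk_coeffs:
  "m + k \<le> K \<Longrightarrow> class_coeffs K m k = Nmk_coeffs m k"
proof (induction "m + k" arbitrary: m k rule: less_induct)
  case less
  show ?case
  proof (cases "m + k = 0")
    case True
    then have "tasep_class m k = {[]}"
      by (auto simp: tasep_class_def)
    then show ?thesis
      using True by (auto simp: class_coeffs_def word_coeffs_Nil one_coeffs_def Nmk_coeffs_def
          Nmk_term_0_left fun_eq_iff)
  next
    case False
    have IH: "k \<ge> 1 \<Longrightarrow> class_coeffs K m (k - 1) = Nmk_coeffs m (k - 1)"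
             "m \<ge> 1 \<Longrightarrow> class_coeffs K (m - 1) k = Nmk_coeffs (m - 1) k"
      using less by simp_all
    show ?thesis
    proof (intro ext)
      fix i j
      have "class_coeffs K m k i j
          = (if k \<ge> 1 then shift_b (class_coeffs K m (k - 1)) i j else 0)
          + (if m \<ge> 1 then opE K (class_coeffs K (m - 1) k) i j else 0)"
        by (rule class_coeffs_rec) (use False in linarith)
      also have "\<dots> = Nmk_coeffs m k i j"
        using Nmk_coeffs_rec[of m k K i j] False less.prems IH by simp
      finally show "class_coeffs K m k i j = Nmk_coeffs m k i j" .
    qed
  qed
qed

lemma sum_eval_coeffs:
  "(\<Sum>x\<in>A. eval_coeffs K a b (c x)) = eval_coeffs K a b (\<lambda>i j. \<Sum>x\<in>A. c x i j)"
  unfolding eval_coeffs_def sum_distrib_right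
  by (subst sum.swap, rule sum.cong[OF refl], rule sum.swap)

lemma sum_tasep_weight_class:
  "m + k \<le> n \<Longrightarrow>
   (\<Sum>x\<in>tasep_class m k. tasep_weight n \<alpha> \<beta> x) = eval_coeffs n (1 / \<alpha>) (1 / \<beta>) (Nmk_coeffs m k)"
  by (simp add: tasep_weight_def ansatz_weight_def sum_eval_coeffs
      class_coeffs_eq_Nmk_coeffs[symmetric] class_coeffs_def[abs_def])

lemma power_add_mult_inverse_power:
  fixes x :: real
  assumes "x \<noteq> 0" "j \<le> m"
  shows "x ^ (m + k) * (1 / x) ^ (m - j) = x ^ k * x ^ j"
proof -
  have "x ^ (m + k) = x ^ (m - j) * x ^ (k + j)"
    using assms(2) by (simp flip: power_add)
  then show ?thesis
    using assms(1) by (simp add: power_one_over field_simps power_add)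
qed

lemma eval_Nmk_coeffs:
  assumes "\<alpha> \<noteq> 0" "\<beta> \<noteq> 0" "m + k = n"
  shows "\<alpha> ^ n * \<beta> ^ n * eval_coeffs n (1 / \<alpha>) (1 / \<beta>) (Nmk_coeffs m k) = Nmk \<alpha> \<beta> m k"
proof -
  let ?F = "\<lambda>i j. Nmk_term m k (int m - int i) (int k - int j) * (1 / \<alpha>) ^ i * (1 / \<beta>) ^ j"
  have "eval_coeffs n (1 / \<alpha>) (1 / \<beta>) (Nmk_coeffs m k) = (\<Sum>i\<le>m. \<Sum>j\<le>n. ?F i j)"
    unfolding eval_coeffs_def Nmk_coeffs_def
    by (rule sum.mono_neutral_right) (use assms(3) in \<open>auto intro!: sum.neutral simp: Nmk_term_neg\<close>)
  also have "\<dots> = (\<Sum>i\<le>m. \<Sum>j\<le>k. ?F i j)"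
    by (rule sum.cong[OF refl], rule sum.mono_neutral_right) (use assms(3) in \<open>auto simp: Nmk_term_neg\<close>)
  also have "\<dots> = (\<Sum>j'\<le>m. \<Sum>l\<le>k. ?F (m - j') (k - l))"
    by (rule sum.reindex_bij_witness[of _ "\<lambda>a. m - a" "\<lambda>a. m - a"], simp_all,
        rule sum.reindex_bij_witness[of _ "\<lambda>a. k - a" "\<lambda>a. k - a"]) auto
  finally have eval: "eval_coeffs n (1 / \<alpha>) (1 / \<beta>) (Nmk_coeffs m k)
      = (\<Sum>j'\<le>m. \<Sum>l\<le>k. ?F (m - j') (k - l))" .
  have summand: "\<alpha> ^ n * \<beta> ^ n * ?F (m - j') (k - l)
      = \<alpha> ^ k * \<beta> ^ m * (\<alpha> ^ j' * \<beta> ^ l * Nmk_term m k (int j') (int l))"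
    if "j' \<le> m" "l \<le> k" for j' l
  proof -
    have "int m - int (m - j') = int j'" "int k - int (k - l) = int l"
      using that by auto
    then have "\<alpha> ^ n * \<beta> ^ n * ?F (m - j') (k - l)
        = Nmk_term m k (int j') (int l) * (\<alpha> ^ n * (1 / \<alpha>) ^ (m - j')) * (\<beta> ^ n * (1 / \<beta>) ^ (k - l))"
      by (simp only: mult_ac)
    also have "\<alpha> ^ n * (1 / \<alpha>) ^ (m - j') = \<alpha> ^ k * \<alpha> ^ j'"
      using power_add_mult_inverse_power[of \<alpha> j' m k] assms that by simp
    also have "\<beta> ^ n * (1 / \<beta>) ^ (k - l) = \<beta> ^ m * \<beta> ^ l"
      using power_add_mult_inverse_power[of \<beta> l k m] assms that by (simp add: add.commute)
    finally show ?thesis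
      by (simp only: mult_ac)
  qed
  have "\<alpha> ^ n * \<beta> ^ n * eval_coeffs n (1 / \<alpha>) (1 / \<beta>) (Nmk_coeffs m k)
      = \<alpha> ^ k * \<beta> ^ m * (\<Sum>j'\<le>m. \<Sum>l\<le>k. \<alpha> ^ j' * \<beta> ^ l * Nmk_term m k (int j') (int l))"
    unfolding eval sum_distrib_left by (intro sum.cong refl summand) auto
  then show ?thesis
    by (simp add: Nmk_def Nmk_term_def atLeast0AtMost)
qed

theorem corollary6p2:
  fixes n k :: nat and \<alpha> \<beta> :: real and \<pi> :: "bool list \<Rightarrow> real"
  assumes "n \<ge> 1" and "\<alpha> > 0" and "\<beta> > 0"
    and "tasep_stationary n \<alpha> \<beta> \<pi>"
    and "k \<le> n"
  shows "(\<Sum>x\<in>{x\<in>tasep_states n. length (filter id x) = k}. \<pi> x)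
         = Nmk \<alpha> \<beta> (n - k) k / Zn \<alpha> \<beta> n"
proof -
  let ?M = "tasep_weight n \<alpha> \<beta>" and ?c = "\<alpha> ^ n * \<beta> ^ n"
  have level_set: "{x\<in>tasep_states n. length (filter id x) = j} = tasep_class (n - j) j" if "j \<le> n" for j
    using that by (auto simp: tasep_states_def tasep_class_def)
  have class_sum: "(\<Sum>x\<in>tasep_class (n - j) j. ?M x) = Nmk \<alpha> \<beta> (n - j) j / ?c" if "j \<le> n" for j
    using sum_tasep_weight_class[of "n - j" j n \<alpha> \<beta>] eval_Nmk_coeffs[of \<alpha> \<beta> "n - j" j n] assms that
    by (simp add: field_simps)
  have "(\<Sum>x\<in>tasep_states n. ?M x) = (\<Sum>j\<in>{0..n}. \<Sum>x\<in>{x\<in>tasep_states n. length (filter id x) = j}. ?M x)"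
    by (rule sum.group[symmetric, OF finite_tasep_states]) (auto simp: tasep_states_def)
  also have "\<dots> = Zn \<alpha> \<beta> n / ?c"
    by (simp add: level_set class_sum Zn_def sum_divide_distrib)
  finally have total: "(\<Sum>x\<in>tasep_states n. ?M x) = Zn \<alpha> \<beta> n / ?c" .
  have "(\<Sum>x\<in>{x\<in>tasep_states n. length (filter id x) = k}. \<pi> x)
      = (\<Sum>x\<in>{x\<in>tasep_states n. length (filter id x) = k}. ?M x / (\<Sum>y\<in>tasep_states n. ?M y))"
    by (rule sum.cong) (simp_all add: tasep_stationary_eq_weight[OF assms(1-4)])
  also have "\<dots> = (\<Sum>x\<in>tasep_class (n - k) k. ?M x) / (\<Sum>y\<in>tasep_states n. ?M y)"
    by (simp add: level_set[OF assms(5)] sum_divide_distrib)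
  also have "\<dots> = Nmk \<alpha> \<beta> (n - k) k / Zn \<alpha> \<beta> n"
    using assms by (simp add: class_sum total)
  finally show ?thesis .
qed

end
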